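(* Let $\mathcal{F}$ be a class of real functions on $\mathcal{X}$ and $(\mathbf{X}_i,Y_i)_{i=1}^n$ a sample. Let $\widehat g_1,\dots,\widehat g_d$ be $\Delta_1$-empirical risk minimizers in $\mathcal{F}$, and let $\widetilde f$ be an exact empirical risk minimizer over $Star_d(\mathcal{F},\widehat g_1,\dots,\widehat g_d)$. Then for every $h\in\mathcal{F}$, $$\widehat{\mathbb{E}}(h-Y)^2-\widehat{\mathbb{E}}(\widetilde f-Y)^2\ge \frac1{18}\,\widehat{\mathbb{E}}(\widetilde f-h)^2-2\Delta_1.$$
   Context: $\widehat{\mathbb{E}}(f)=\frac1n\sum_{i=1}^n f(\mathbf{X}_i)$ (and $\widehat{\mathbb{E}}(f-Y)^2=\frac1n\sum_i(f(\mathbf{X}_i)-Y_i)^2$). $\widehat g\in\mathcal{G}$ is a $\Delta$-empirical risk minimizer in $\mathcal{G}$ if $\widehat{\mathbb{E}}(\widehat g-Y)^2\le\min_{f\in\mathcal{G}}\widehat{\mathbb{E}}(f-Y)^2+\Delta$. $Star_d(\mathcal{F},\widehat g_1,\dots,\widehat g_d)=\{\sum_{i=1}^d\lambda_i\widehat g_i+(1-\sum_i\lambda_i)f:\lambda_i\in[0,1],\ 1-\sum_i\lambda_i\in[0,1],\ f\in\mathcal{F}\}$. *)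

theory Defs
  imports Main "HOL-Analysis.Analysis"
begin

definition emp_mean :: "nat \<Rightarrow> (nat \<Rightarrow> real) \<Rightarrow> real" where
  "emp_mean n u = (1 / real n) * (\<Sum>i = 1..n. u i)"

definition emp_risk :: "nat \<Rightarrow> (nat \<Rightarrow> 'x) \<Rightarrow> (nat \<Rightarrow> real) \<Rightarrow> ('x \<Rightarrow> real) \<Rightarrow> real" where
  "emp_risk n X Y f = emp_mean n (\<lambda>i. (f (X i) - Y i)^2)"

definition emp_dist2 :: "nat \<Rightarrow> (nat \<Rightarrow> 'x) \<Rightarrow> ('x \<Rightarrow> real) \<Rightarrow> ('x \<Rightarrow> real) \<Rightarrow> real" where
  "emp_dist2 n X f g = emp_mean n (\<lambda>i. (f (X i) - g (X i))^2)"

definition is_ERM :: "nat \<Rightarrow> (nat \<Rightarrow> 'x) \<Rightarrow> (nat \<Rightarrow> real) \<Rightarrow> real \<Rightarrow> ('x \<Rightarrow> real) set \<Rightarrow> ('x \<Rightarrow> real) \<Rightarrow> bool" where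
  "is_ERM n X Y \<Delta> G g \<longleftrightarrow> g \<in> G \<and> emp_risk n X Y g \<le> (INF f\<in>G. emp_risk n X Y f) + \<Delta>"

definition star_d :: "nat \<Rightarrow> ('x \<Rightarrow> real) set \<Rightarrow> (nat \<Rightarrow> ('x \<Rightarrow> real)) \<Rightarrow> ('x \<Rightarrow> real) set" where
  "star_d d F g = {(\<lambda>x. (\<Sum>i = 1..d. lam i * g i x) + (1 - (\<Sum>i = 1..d. lam i)) * f x) | lam f.
      (\<forall>i\<in>{1..d}. 0 \<le> lam i \<and> lam i \<le> 1) \<and>
      0 \<le> 1 - (\<Sum>i = 1..d. lam i) \<and> 1 - (\<Sum>i = 1..d. lam i) \<le> 1 \<and> f \<in> F}"

end

theory Submission
  imports Defs
begin

text \<open>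
  Take an approximate minimizer \<open>b = g\<^sub>1\<close>. The star set contains \<open>h\<close>, the midpoint of \<open>h\<close>
  and \<open>b\<close>, and the midpoint of \<open>f\<close> and \<open>b\<close>, where \<open>f\<close> is the exact minimizer over the star.
  Since the squared risk of a midpoint is the mean of the risks minus a quarter of the squared
  distance, comparing \<open>f\<close> with the two midpoints bounds both distances \<open>\<parallel>b - h\<parallel>\<^sup>2\<close> and
  \<open>\<parallel>f - b\<parallel>\<^sup>2\<close> by the excess risk \<open>R h - R f\<close> (plus \<open>\<Delta>\<close>); the inequality
  \<open>(a + c)\<^sup>2 \<le> 2a\<^sup>2 + 2c\<^sup>2\<close> then bounds \<open>\<parallel>f - h\<parallel>\<^sup>2\<close>.
\<close>

lemma emp_mean_add: "emp_mean n (\<lambda>i. u i + v i) = emp_mean n u + emp_mean n v"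
  by (simp add: emp_mean_def sum.distrib algebra_simps)

lemma emp_mean_cmult: "emp_mean n (\<lambda>i. a * u i) = a * emp_mean n u"
  by (simp add: emp_mean_def sum_distrib_left)

lemma emp_mean_mono:
  assumes "\<And>i. u i \<le> v i"
  shows "emp_mean n u \<le> emp_mean n v"
  unfolding emp_mean_def using assms
  by (intro mult_left_mono sum_mono) auto

lemma emp_risk_nonneg: "0 \<le> emp_risk n X Y f"
  unfolding emp_risk_def emp_mean_def by (intro mult_nonneg_nonneg sum_nonneg) auto

lemma emp_dist2_nonneg: "0 \<le> emp_dist2 n X u v"
  unfolding emp_dist2_def emp_mean_def by (intro mult_nonneg_nonneg sum_nonneg) auto

lemma emp_dist2_commute: "emp_dist2 n X u v = emp_dist2 n X v u"
  unfolding emp_dist2_def by (simp add: power2_commute)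

lemma emp_risk_midpoint:
  "emp_risk n X Y (\<lambda>x. (u x + v x) / 2) =
   emp_risk n X Y u / 2 + emp_risk n X Y v / 2 - emp_dist2 n X u v / 4"
proof -
  have pointwise: "(\<lambda>i. ((u (X i) + v (X i)) / 2 - Y i)^2) =
        (\<lambda>i. (1/2) * (u (X i) - Y i)^2 + (1/2) * (v (X i) - Y i)^2 + (-1/4) * (u (X i) - v (X i))^2)"
    by (rule ext) (simp add: power2_eq_square field_simps)
  show ?thesis
    unfolding emp_risk_def emp_dist2_def pointwise emp_mean_add emp_mean_cmult by simp
qed

lemma emp_dist2_triangle:
  "emp_dist2 n X u w \<le> 2 * emp_dist2 n X u v + 2 * emp_dist2 n X v w"
proof -
  have "(u (X i) - w (X i))^2 \<le> 2 * (u (X i) - v (X i))^2 + 2 * (v (X i) - w (X i))^2" for i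
  proof -
    have "0 \<le> (u (X i) - 2 * v (X i) + w (X i))^2" by simp
    then show ?thesis by (simp add: power2_eq_square algebra_simps)
  qed
  then have "emp_dist2 n X u w \<le>
      emp_mean n (\<lambda>i. 2 * (u (X i) - v (X i))^2 + 2 * (v (X i) - w (X i))^2)"
    unfolding emp_dist2_def by (rule emp_mean_mono)
  then show ?thesis
    unfolding emp_dist2_def emp_mean_add emp_mean_cmult .
qed

lemma is_ERM_risk_le:
  assumes "is_ERM n X Y \<Delta> G g" "f \<in> G"
  shows "emp_risk n X Y g \<le> emp_risk n X Y f + \<Delta>"
proof -
  have "(INF f\<in>G. emp_risk n X Y f) \<le> emp_risk n X Y f"
    by (rule cINF_lower) (auto intro!: bdd_belowI[where m=0] simp: emp_risk_nonneg assms)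
  then show ?thesis using assms(1) unfolding is_ERM_def by linarith
qed

lemma is_ERM_nonneg: "is_ERM n X Y \<Delta> G g \<Longrightarrow> 0 \<le> \<Delta>"
  using is_ERM_risk_le[of n X Y \<Delta> G g g] by (simp add: is_ERM_def)

lemma is_ERM_excess_risk_ge:
  assumes ERM: "is_ERM n X Y 0 S f"
    and "h \<in> S" "(\<lambda>x. (h x + b x) / 2) \<in> S" "(\<lambda>x. (f x + b x) / 2) \<in> S"
    and b_risk: "emp_risk n X Y b \<le> emp_risk n X Y h + \<Delta>"
  shows "emp_risk n X Y h - emp_risk n X Y f \<ge> emp_dist2 n X f h / 12 - 2/3 * \<Delta>"
proof -
  let ?R = "emp_risk n X Y" and ?D = "emp_dist2 n X"
  have "?R f \<le> ?R h"
    using is_ERM_risk_le[OF ERM \<open>h \<in> S\<close>] by simp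
  moreover have "?R f \<le> ?R h / 2 + ?R b / 2 - ?D h b / 4"
    using is_ERM_risk_le[OF ERM assms(3)] by (simp add: emp_risk_midpoint)
  moreover have "?R f \<le> ?R f / 2 + ?R b / 2 - ?D f b / 4"
    using is_ERM_risk_le[OF ERM assms(4)] by (simp add: emp_risk_midpoint)
  moreover have "?D f h \<le> 2 * ?D f b + 2 * ?D b h"
    by (rule emp_dist2_triangle)
  ultimately show ?thesis
    using b_risk emp_dist2_commute[of n X h b] by linarith
qed

lemma star_d_base: "f \<in> F \<Longrightarrow> f \<in> star_d d F g"
  unfolding star_d_def by (rule CollectI, rule exI[where x="\<lambda>i. 0"], rule exI[where x=f]) simp

lemma star_d_midpoint:
  assumes "p \<in> star_d d F g" "j \<in> {1..d}"
  shows "(\<lambda>x. (p x + g j x) / 2) \<in> star_d d F g"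
proof -
  obtain lam f where p: "p = (\<lambda>x. (\<Sum>i = 1..d. lam i * g i x) + (1 - (\<Sum>i = 1..d. lam i)) * f x)"
    and lam: "\<forall>i\<in>{1..d}. 0 \<le> lam i \<and> lam i \<le> 1"
    and "0 \<le> 1 - (\<Sum>i = 1..d. lam i)" and "f \<in> F"
    using assms(1) unfolding star_d_def by blast
  define lam' where "lam' i = lam i / 2 + (if i = j then 1/2 else 0)" for i
  have sum_lam': "(\<Sum>i = 1..d. lam' i) = (\<Sum>i = 1..d. lam i) / 2 + 1/2"
    using assms(2) by (simp add: lam'_def sum.distrib sum_divide_distrib)
  have sum_lam'_g: "(\<Sum>i = 1..d. lam' i * g i x) = (\<Sum>i = 1..d. lam i * g i x) / 2 + g j x / 2"
    for x
  proof -
    have "(\<Sum>i = 1..d. lam' i * g i x) =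
        (\<Sum>i = 1..d. lam i * g i x / 2 + (if i = j then g j x / 2 else 0))"
      by (rule sum.cong) (auto simp: lam'_def algebra_simps)
    then show ?thesis
      using assms(2) by (simp add: sum.distrib sum_divide_distrib)
  qed
  have "(\<lambda>x. (p x + g j x) / 2) = (\<lambda>x. (\<Sum>i = 1..d. lam' i * g i x) + (1 - (\<Sum>i = 1..d. lam' i)) * f x)"
    unfolding p sum_lam' sum_lam'_g by (rule ext) (simp add: field_simps)
  moreover have "0 \<le> (\<Sum>i = 1..d. lam i)"
    using lam by (intro sum_nonneg) auto
  then have "0 \<le> 1 - (\<Sum>i = 1..d. lam' i) \<and> 1 - (\<Sum>i = 1..d. lam' i) \<le> 1"
    using sum_lam' \<open>0 \<le> 1 - (\<Sum>i = 1..d. lam i)\<close> by linarith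
  moreover have "\<forall>i\<in>{1..d}. 0 \<le> lam' i \<and> lam' i \<le> 1"
    using lam assms(2) by (auto simp: lam'_def)
  ultimately show ?thesis
    unfolding star_d_def using \<open>f \<in> F\<close> by blast
qed

theorem lemma1:
  fixes F :: "('x \<Rightarrow> real) set"
    and X :: "nat \<Rightarrow> 'x" and Y :: "nat \<Rightarrow> real"
    and n d :: nat and \<Delta>\<^sub>1 :: real
    and g :: "nat \<Rightarrow> ('x \<Rightarrow> real)" and ft h :: "'x \<Rightarrow> real"
  assumes "n \<ge> 1" and "d \<ge> 1"
    and "\<forall>i\<in>{1..d}. is_ERM n X Y \<Delta>\<^sub>1 F (g i)"
    and "is_ERM n X Y 0 (star_d d F g) ft"
    and "h \<in> F"
  shows "emp_risk n X Y h - emp_risk n X Y ft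
           \<ge> (1/18) * emp_dist2 n X ft h - 2 * \<Delta>\<^sub>1"
proof -
  have one: "1 \<in> {1..d}" using \<open>d \<ge> 1\<close> by simp
  then have g1: "is_ERM n X Y \<Delta>\<^sub>1 F (g 1)" using assms(3) by blast
  have ft_star: "ft \<in> star_d d F g" using assms(4) by (simp add: is_ERM_def)
  have h_star: "h \<in> star_d d F g" using \<open>h \<in> F\<close> by (rule star_d_base)
  have "emp_risk n X Y h - emp_risk n X Y ft \<ge> emp_dist2 n X ft h / 12 - 2/3 * \<Delta>\<^sub>1"
    using assms(4) h_star star_d_midpoint[OF h_star one] star_d_midpoint[OF ft_star one]
      is_ERM_risk_le[OF g1 \<open>h \<in> F\<close>]
    by (rule is_ERM_excess_risk_ge)
  then show ?thesis
    using emp_dist2_nonneg[of n X ft h] is_ERM_nonneg[OF g1] by linarith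
qed

end
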